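(* Let $t,u\in\mathbb{R}$ satisfy $t\notin\{0,1\}$, $u\notin\{0,1,-1\}$, $2u\ne t+1$, $tu+u\ne2$, $D_F(t,u)\ne0$ and $V_F(t,\omega(u))>0$. Then $\mathfrak{g}_{t,u}\in\mathcal{E}(\mathcal{P}_{4,4})$.
   Context: Variables $a,b,c,d$. Put $s_0=a^4+b^4+c^4+d^4-4abcd$; $s_1=T_{3,1}-12abcd$ with $T_{3,1}=\sum_{i\ne j}x_i^3x_j$; $s_2=\sum_{i<j}x_i^2x_j^2-6abcd$; $s_3=T_{2,1,1}-12abcd$ with $T_{2,1,1}=\sum_i x_i^2\sum_{j<k,\ j,k\ne i}x_jx_k$; $s_4=abcd$ (here $(x_1,x_2,x_3,x_4)=(a,b,c,d)$). Let $\omega(u)=u+\frac1u-2$ and $p^G_0(t,w)=(4t+2)w^2-3(t-1)^2w$, $p^G_1(t,w)=-2(t+1)^2w^2+2(t+1)(t-1)^2w$, $p^G_2(t,w)=4t^2w^2-2(t-1)^2(2t-1)w+2(t-1)^4$, $p^G_3(t,w)=2(t+1)^2w^2-(t-1)^2(t^2+3)w-2(t-1)^4$, $p^G_4(t,w)=2(t-1)^4w^2$, and for $u\ne0$, $\mathfrak{g}_{t,u}=u^2\sum_{i=0}^4p^G_i(t,\omega(u))s_i$. Let $V_F(t,w)=(3+6t-t^2)w^2-6(t-1)^2w$ and $D_F(t,u)=(3+6t-t^2)-(13+6t+5t^2)u+(10+9t+4t^2+t^3)u^2-(1+6t+t^2)u^3$. $\mathcal{P}_{4,4}$ is the cone of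 real quartic forms in $a,b,c,d$ nonnegative on $\mathbb{R}^4$; $f\in\mathcal{P}_{4,4}\setminus\{0\}$ is extremal ($f\in\mathcal{E}(\mathcal{P}_{4,4})$) if $f=g+h$ with $g,h\in\mathcal{P}_{4,4}$ forces $g,h\in\mathbb{R}_{\ge0}f$. *)

theory Defs
  imports Complex_Main
begin

type_synonym form4 = "real \<Rightarrow> real \<Rightarrow> real \<Rightarrow> real \<Rightarrow> real"

definition exps4 :: "(nat \<times> nat \<times> nat \<times> nat) set" where
  "exps4 = {(i,j,k,l). i \<le> 4 \<and> j \<le> 4 \<and> k \<le> 4 \<and> l \<le> 4 \<and> i + j + k + l = 4}"

definition quartic_form :: "form4 \<Rightarrow> bool" where
  "quartic_form f \<longleftrightarrow> (\<exists>coef :: nat \<times> nat \<times> nat \<times> nat \<Rightarrow> real.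
     \<forall>a b c d. f a b c d =
       (\<Sum>(i,j,k,l)\<in>exps4. coef (i,j,k,l) * a ^ i * b ^ j * c ^ k * d ^ l))"

definition P44 :: "form4 set" where
  "P44 = {f. quartic_form f \<and> (\<forall>a b c d. f a b c d \<ge> 0)}"

definition extremal_P44 :: "form4 \<Rightarrow> bool" where
  "extremal_P44 f \<longleftrightarrow> f \<in> P44 \<and> f \<noteq> (\<lambda>a b c d. 0) \<and>
     (\<forall>g \<in> P44. \<forall>h \<in> P44. f = (\<lambda>a b c d. g a b c d + h a b c d) \<longrightarrow>
        (\<exists>r\<ge>0. g = (\<lambda>a b c d. r * f a b c d)) \<and>
        (\<exists>r\<ge>0. h = (\<lambda>a b c d. r * f a b c d)))"

definition s0 :: form4 where
  "s0 a b c d = a^4 + b^4 + c^4 + d^4 - 4*a*b*c*d"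

definition T31 :: form4 where
  "T31 a b c d =
     a^3*b + a^3*c + a^3*d + b^3*a + b^3*c + b^3*d +
     c^3*a + c^3*b + c^3*d + d^3*a + d^3*b + d^3*c"

definition s1 :: form4 where
  "s1 a b c d = T31 a b c d - 12*a*b*c*d"

definition s2 :: form4 where
  "s2 a b c d = a^2*b^2 + a^2*c^2 + a^2*d^2 + b^2*c^2 + b^2*d^2 + c^2*d^2 - 6*a*b*c*d"

definition T211 :: form4 where
  "T211 a b c d = a^2*(b*c + b*d + c*d) + b^2*(a*c + a*d + c*d)
                + c^2*(a*b + a*d + b*d) + d^2*(a*b + a*c + b*c)"

definition s3 :: form4 where
  "s3 a b c d = T211 a b c d - 12*a*b*c*d"

definition s4 :: form4 where
  "s4 a b c d = a*b*c*d"

definition omega :: "real \<Rightarrow> real" where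
  "omega u = u + 1/u - 2"

definition pG0 :: "real \<Rightarrow> real \<Rightarrow> real" where
  "pG0 t w = (4*t+2)*w^2 - 3*(t-1)^2*w"
definition pG1 :: "real \<Rightarrow> real \<Rightarrow> real" where
  "pG1 t w = -2*(t+1)^2*w^2 + 2*(t+1)*(t-1)^2*w"
definition pG2 :: "real \<Rightarrow> real \<Rightarrow> real" where
  "pG2 t w = 4*t^2*w^2 - 2*(t-1)^2*(2*t-1)*w + 2*(t-1)^4"
definition pG3 :: "real \<Rightarrow> real \<Rightarrow> real" where
  "pG3 t w = 2*(t+1)^2*w^2 - (t-1)^2*(t^2+3)*w - 2*(t-1)^4"
definition pG4 :: "real \<Rightarrow> real \<Rightarrow> real" where
  "pG4 t w = 2*(t-1)^4*w^2"

definition gG :: "real \<Rightarrow> real \<Rightarrow> form4" where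
  "gG t u a b c d = u^2 * (pG0 t (omega u) * s0 a b c d + pG1 t (omega u) * s1 a b c d
      + pG2 t (omega u) * s2 a b c d + pG3 t (omega u) * s3 a b c d
      + pG4 t (omega u) * s4 a b c d)"

definition VF :: "real \<Rightarrow> real \<Rightarrow> real" where
  "VF t w = (3 + 6*t - t^2)*w^2 - 6*(t-1)^2*w"

definition DF :: "real \<Rightarrow> real \<Rightarrow> real" where
  "DF t u = (3 + 6*t - t^2) - (13 + 6*t + 5*t^2)*u + (10 + 9*t + 4*t^2 + t^3)*u^2
            - (1 + 6*t + t^2)*u^3"

end

theory Submission
  imports Defs
begin

text \<open>
  In the Hadamard coordinates (a,b,c,d) = (m+x+y+z, m+x-y-z, m-x+y-z, m-x-y+z) the form g_{t,u}
  becomes u^2 h with h = 2(t-1)^4 (w m^2 - (w+4) S)^2 + E T + G m x y z, where w = \<omega>(u),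
  S = x^2+y^2+z^2, T = x^2 y^2 + y^2 z^2 + z^2 x^2, and E, G depend only on t and w, with G a
  multiple of V_F(t,w). On the diagonal x = y = z the form h is a square times
  2 w^2 (...)^2 + 8 V_F r^2. Since h is affine in T, and T lies between 3|xyz|\<rho> and 3\<rho>^4
  where S = 3\<rho>^2, this gives h \<ge> 0 as soon as V_F \<ge> 0.

  The form h has ten singular zeros: (1+u, \<plusminus>(1-u) e_i) and (t+3, (t-1) s) for the four sign
  vectors s with product 1. If g = p + q with p, q \<ge> 0, then p vanishes to second order wherever g
  does, so p - r g, with r chosen to kill the value at (1,1,1,1), has all ten singular zeros.
  Elimination on its 35 coefficients shows that such a quartic is zero; hence p and q are
  multiples of g.
\<close>

section \<open>Homogeneous forms in four variables\<close>

definition exps :: "nat \<Rightarrow> (nat \<times> nat \<times> nat \<times> nat) set" where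
  "exps n = {(i,j,k,l). i + j + k + l = n}"

lemma finite_exps: "finite (exps n)"
proof (rule finite_subset)
  show "exps n \<subseteq> {..n} \<times> {..n} \<times> {..n} \<times> {..n}"
    by (auto simp: exps_def)
qed simp

lemma exps_4: "exps 4 = {(0,0,0,4), (0,0,1,3), (0,0,2,2), (0,0,3,1), (0,0,4,0), (0,1,0,3), (0,1,1,2),
  (0,1,2,1), (0,1,3,0), (0,2,0,2), (0,2,1,1), (0,2,2,0), (0,3,0,1), (0,3,1,0), (0,4,0,0), (1,0,0,3),
  (1,0,1,2), (1,0,2,1), (1,0,3,0), (1,1,0,2), (1,1,1,1), (1,1,2,0), (1,2,0,1), (1,2,1,0), (1,3,0,0),
  (2,0,0,2), (2,0,1,1), (2,0,2,0), (2,1,0,1), (2,1,1,0), (2,2,0,0), (3,0,0,1), (3,0,1,0), (3,1,0,0),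
  (4,0,0,0)}"
proof -
  have bounds: "i + j + k + l = 4 \<Longrightarrow> i \<le> 4 \<and> j \<le> 4 \<and> k \<le> 4 \<and> i + j + k \<le> 4 \<and> l = 4 - i - j - k"
    for i j k l :: nat by arith
  have cases: "i \<le> 4 \<Longrightarrow> i = 0 \<or> i = 1 \<or> i = 2 \<or> i = 3 \<or> i = 4" for i :: nat
    by arith
  show ?thesis unfolding exps_def
    apply (rule set_eqI, clarsimp, rule iffI)
     apply (drule bounds, elim conjE, drule cases, drule cases, drule cases)
     apply (elim disjE; simp)
    apply (elim disjE; simp)
    done
qed

lemma exps4_eq_exps: "exps4 = exps 4"
  by (auto simp: exps4_def exps_def)

definition form_of :: "nat \<Rightarrow> (nat \<times> nat \<times> nat \<times> nat \<Rightarrow> real) \<Rightarrow> form4" where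
  "form_of n c x1 x2 x3 x4 = (\<Sum>(i,j,k,l)\<in>exps n. c (i,j,k,l) * x1^i * x2^j * x3^k * x4^l)"

definition hom_form :: "nat \<Rightarrow> form4 \<Rightarrow> bool" where
  "hom_form n f \<longleftrightarrow> (\<exists>c. f = form_of n c)"

lemma quartic_form_iff_hom_form: "quartic_form f \<longleftrightarrow> hom_form 4 f"
  by (simp add: quartic_form_def hom_form_def form_of_def exps4_eq_exps fun_eq_iff)

lemma hom_form_zero: "hom_form n (\<lambda>x1 x2 x3 x4. 0)"
  unfolding hom_form_def form_of_def by (rule exI[of _ "\<lambda>_. 0"]) simp

lemma hom_form_add:
  assumes "hom_form n f" "hom_form n g"
  shows "hom_form n (\<lambda>x1 x2 x3 x4. f x1 x2 x3 x4 + g x1 x2 x3 x4)"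
proof -
  from assms obtain c d where "f = form_of n c" "g = form_of n d"
    by (auto simp: hom_form_def)
  then have "(\<lambda>x1 x2 x3 x4. f x1 x2 x3 x4 + g x1 x2 x3 x4) = form_of n (\<lambda>e. c e + d e)"
    by (simp add: fun_eq_iff form_of_def split_def sum.distrib distrib_right)
  then show ?thesis by (auto simp: hom_form_def)
qed

lemma hom_form_scale:
  assumes "hom_form n f"
  shows "hom_form n (\<lambda>x1 x2 x3 x4. r * f x1 x2 x3 x4)"
proof -
  from assms obtain c where "f = form_of n c" by (auto simp: hom_form_def)
  then have "(\<lambda>x1 x2 x3 x4. r * f x1 x2 x3 x4) = form_of n (\<lambda>e. r * c e)"
    by (simp add: fun_eq_iff form_of_def split_def sum_distrib_left mult.assoc)
  then show ?thesis by (auto simp: hom_form_def)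
qed

lemma hom_form_diff:
  assumes "hom_form n f" "hom_form n g"
  shows "hom_form n (\<lambda>x1 x2 x3 x4. f x1 x2 x3 x4 - r * g x1 x2 x3 x4)"
  using hom_form_add[OF assms(1) hom_form_scale[OF assms(2), of "-r"]] by simp

lemma hom_form_sum:
  assumes "finite A" "\<And>i. i \<in> A \<Longrightarrow> hom_form n (F i)"
  shows "hom_form n (\<lambda>x1 x2 x3 x4. \<Sum>i\<in>A. F i x1 x2 x3 x4)"
  using assms by (induction A rule: finite_induct) (simp_all add: hom_form_zero hom_form_add)

lemma hom_form_monomial:
  assumes "(i,j,k,l) \<in> exps n"
  shows "hom_form n (\<lambda>x1 x2 x3 x4. x1^i * x2^j * x3^k * x4^l)"
proof -
  let ?c = "\<lambda>e. if e = (i,j,k,l) then 1 else 0 :: real"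
  have "form_of n ?c x1 x2 x3 x4 = x1^i * x2^j * x3^k * x4^l" for x1 x2 x3 x4
    unfolding form_of_def split_def using finite_exps assms
    by (simp add: if_distrib[where f = "\<lambda>z. z * _"] cong: if_cong)
  then show ?thesis unfolding hom_form_def by (intro exI[of _ ?c]) (simp add: fun_eq_iff)
qed

lemma hom_form_mult:
  assumes "hom_form n f" "hom_form m g"
  shows "hom_form (n + m) (\<lambda>x1 x2 x3 x4. f x1 x2 x3 x4 * g x1 x2 x3 x4)"
proof -
  from assms obtain c d where f: "f = form_of n c" and g: "g = form_of m d"
    by (auto simp: hom_form_def)
  define prod_term where "prod_term e e' = (\<lambda>x1 x2 x3 x4 :: real.
      (c e * d e') * (case e of (i,j,k,l) \<Rightarrow> case e' of (i',j',k',l') \<Rightarrow>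
         x1^(i+i') * x2^(j+j') * x3^(k+k') * x4^(l+l')))" for e e'
  have "f x1 x2 x3 x4 * g x1 x2 x3 x4 = (\<Sum>e\<in>exps n. \<Sum>e'\<in>exps m. prod_term e e' x1 x2 x3 x4)"
    for x1 x2 x3 x4
    unfolding f g form_of_def prod_term_def sum_product split_def
    by (intro sum.cong refl) (simp add: power_add algebra_simps)
  moreover have "hom_form (n + m) (prod_term e e')" if "e \<in> exps n" "e' \<in> exps m" for e e'
  proof (cases e, cases e')
    fix i j k l i' j' k' l' assume "e = (i,j,k,l)" "e' = (i',j',k',l')"
    moreover from this that have "(i+i', j+j', k+k', l+l') \<in> exps (n + m)"
      by (simp add: exps_def)
    ultimately show ?thesis
      unfolding prod_term_def by (simp add: hom_form_scale hom_form_monomial)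
  qed
  ultimately show ?thesis
    by (simp add: hom_form_sum finite_exps)
qed

lemma hom_form_one: "hom_form 0 (\<lambda>x1 x2 x3 x4. 1)"
  using hom_form_monomial[of 0 0 0 0 0] by (simp add: exps_def)

lemma hom_form_power:
  assumes "hom_form 1 f"
  shows "hom_form k (\<lambda>x1 x2 x3 x4. f x1 x2 x3 x4 ^ k)"
proof (induction k)
  case 0
  then show ?case using hom_form_one by simp
next
  case (Suc k)
  then show ?case using hom_form_mult[OF assms Suc] by simp
qed

lemma hom_form_linear: "hom_form 1 (\<lambda>x1 x2 x3 x4. p1 * x1 + p2 * x2 + p3 * x3 + p4 * x4)"
proof -
  have "exps 1 = {(1,0,0,0), (0,1,0,0), (0,0,1,0), (0,0,0,1)}"
    by (auto simp: exps_def)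
  then show ?thesis
    unfolding hom_form_def form_of_def
    by (intro exI[of _ "\<lambda>(i,j,k,l). p1 ^ i * p2 ^ j * p3 ^ k * p4 ^ l"]) (simp add: fun_eq_iff)
qed

lemma hom_form_subst:
  assumes "hom_form n f" "hom_form 1 L1" "hom_form 1 L2" "hom_form 1 L3" "hom_form 1 L4"
  shows "hom_form n (\<lambda>x1 x2 x3 x4. f (L1 x1 x2 x3 x4) (L2 x1 x2 x3 x4) (L3 x1 x2 x3 x4) (L4 x1 x2 x3 x4))"
proof -
  from assms(1) obtain c where f: "f = form_of n c" by (auto simp: hom_form_def)
  have "hom_form n (\<lambda>x1 x2 x3 x4. c (i,j,k,l) * L1 x1 x2 x3 x4 ^ i * L2 x1 x2 x3 x4 ^ j
                                   * L3 x1 x2 x3 x4 ^ k * L4 x1 x2 x3 x4 ^ l)"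
    if "(i,j,k,l) \<in> exps n" for i j k l
  proof -
    have "hom_form (i + j + k + l) (\<lambda>x1 x2 x3 x4. L1 x1 x2 x3 x4 ^ i * L2 x1 x2 x3 x4 ^ j
                                   * L3 x1 x2 x3 x4 ^ k * L4 x1 x2 x3 x4 ^ l)"
      by (intro hom_form_mult hom_form_power assms)
    then show ?thesis
      using that hom_form_scale[of n _ "c (i,j,k,l)"] by (simp add: exps_def mult.assoc)
  qed
  then show ?thesis
    unfolding f form_of_def split_def by (intro hom_form_sum finite_exps) auto
qed

section \<open>Singular zeros and the Hadamard substitution\<close>

text \<open>The truncated exponent \<open>i - 1\<close> is harmless at \<open>i = 0\<close>, where the factor \<open>of_nat i\<close> vanishes.\<close>

definition form_of_dderiv ::
    "nat \<Rightarrow> (nat \<times> nat \<times> nat \<times> nat \<Rightarrow> real) \<Rightarrow> real \<Rightarrow> real \<Rightarrow> real \<Rightarrow> real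
     \<Rightarrow> real \<Rightarrow> real \<Rightarrow> real \<Rightarrow> real \<Rightarrow> real" where
  "form_of_dderiv n c x1 x2 x3 x4 v1 v2 v3 v4 = (\<Sum>(i,j,k,l)\<in>exps n. c (i,j,k,l) *
      (of_nat i * x1^(i-1) * v1 * x2^j * x3^k * x4^l + of_nat j * x1^i * x2^(j-1) * v2 * x3^k * x4^l
     + of_nat k * x1^i * x2^j * x3^(k-1) * v3 * x4^l + of_nat l * x1^i * x2^j * x3^k * x4^(l-1) * v4))"

lemma form_of_has_dderiv:
  "((\<lambda>e. form_of n c (x1 + e*v1) (x2 + e*v2) (x3 + e*v3) (x4 + e*v4))
     has_real_derivative form_of_dderiv n c x1 x2 x3 x4 v1 v2 v3 v4) (at 0)"
  unfolding form_of_def form_of_dderiv_def split_def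
  by (rule derivative_eq_intros refl | simp)+ (simp add: algebra_simps)

definition singular_zero :: "form4 \<Rightarrow> real \<Rightarrow> real \<Rightarrow> real \<Rightarrow> real \<Rightarrow> bool" where
  "singular_zero f x1 x2 x3 x4 \<longleftrightarrow> f x1 x2 x3 x4 = 0 \<and>
     (\<forall>v1 v2 v3 v4. ((\<lambda>e. f (x1 + e*v1) (x2 + e*v2) (x3 + e*v3) (x4 + e*v4))
                       has_real_derivative 0) (at 0))"

lemma singular_zero_dderiv:
  assumes "singular_zero (form_of n c) x1 x2 x3 x4"
  shows "form_of_dderiv n c x1 x2 x3 x4 v1 v2 v3 v4 = 0"
  using assms form_of_has_dderiv DERIV_unique unfolding singular_zero_def by blast

lemma singular_zero_if_nonneg:
  assumes "hom_form n f" "\<And>x1 x2 x3 x4. 0 \<le> f x1 x2 x3 x4" "f x1 x2 x3 x4 = 0"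
  shows "singular_zero f x1 x2 x3 x4"
  unfolding singular_zero_def
proof (intro conjI allI)
  fix v1 v2 v3 v4
  from assms(1) obtain c where f: "f = form_of n c" by (auto simp: hom_form_def)
  have deriv: "((\<lambda>e. f (x1 + e*v1) (x2 + e*v2) (x3 + e*v3) (x4 + e*v4))
      has_real_derivative form_of_dderiv n c x1 x2 x3 x4 v1 v2 v3 v4) (at 0)"
    unfolding f by (rule form_of_has_dderiv)
  have "form_of_dderiv n c x1 x2 x3 x4 v1 v2 v3 v4 = 0"
    by (rule DERIV_local_min[OF deriv, of 1]) (simp_all add: assms)
  with deriv show "((\<lambda>e. f (x1 + e*v1) (x2 + e*v2) (x3 + e*v3) (x4 + e*v4)) has_real_derivative 0) (at 0)"
    by simp
qed (fact assms(3))

lemma singular_zero_diff: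
  assumes "singular_zero f x1 x2 x3 x4" "singular_zero g x1 x2 x3 x4"
  shows "singular_zero (\<lambda>x1 x2 x3 x4. f x1 x2 x3 x4 - r * g x1 x2 x3 x4) x1 x2 x3 x4"
  unfolding singular_zero_def
proof (intro conjI allI)
  fix v1 v2 v3 v4
  have "((\<lambda>e. f (x1 + e*v1) (x2 + e*v2) (x3 + e*v3) (x4 + e*v4)
            - r * g (x1 + e*v1) (x2 + e*v2) (x3 + e*v3) (x4 + e*v4)) has_real_derivative 0 - r * 0) (at 0)"
    using assms unfolding singular_zero_def by (intro DERIV_diff DERIV_cmult) auto
  then show "((\<lambda>e. f (x1 + e*v1) (x2 + e*v2) (x3 + e*v3) (x4 + e*v4)
            - r * g (x1 + e*v1) (x2 + e*v2) (x3 + e*v3) (x4 + e*v4)) has_real_derivative 0) (at 0)"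
    by simp
qed (use assms in \<open>simp add: singular_zero_def\<close>)

definition hadamard :: "form4 \<Rightarrow> form4" where
  "hadamard f m a b c = f (m+a+b+c) (m+a-b-c) (m-a+b-c) (m-a-b+c)"

lemma hadamard_inverse:
  "f a b c d = hadamard f ((a+b+c+d)/4) ((a+b-c-d)/4) ((a-b+c-d)/4) ((a-b-c+d)/4)"
  unfolding hadamard_def by (simp add: field_simps)

lemma hom_form_hadamard:
  assumes "hom_form n f"
  shows "hom_form n (hadamard f)"
  using hom_form_subst[OF assms hom_form_linear[of 1 1 1 1] hom_form_linear[of 1 1 "-1" "-1"]
      hom_form_linear[of 1 "-1" 1 "-1"] hom_form_linear[of 1 "-1" "-1" 1]]
  by (simp add: hadamard_def[abs_def])

lemma singular_zero_hadamard:
  assumes "singular_zero f (m+a+b+c) (m+a-b-c) (m-a+b-c) (m-a-b+c)"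
  shows "singular_zero (hadamard f) m a b c"
  unfolding singular_zero_def
proof (intro conjI allI)
  fix v1 v2 v3 v4
  have "((\<lambda>e. f (m+a+b+c + e*(v1+v2+v3+v4)) (m+a-b-c + e*(v1+v2-v3-v4))
              (m-a+b-c + e*(v1-v2+v3-v4)) (m-a-b+c + e*(v1-v2-v3+v4))) has_real_derivative 0) (at 0)"
    using assms unfolding singular_zero_def by blast
  then show "((\<lambda>e. hadamard f (m + e*v1) (a + e*v2) (b + e*v3) (c + e*v4)) has_real_derivative 0) (at 0)"
    by (simp add: hadamard_def algebra_simps)
qed (use assms in \<open>simp add: hadamard_def singular_zero_def\<close>)

section \<open>Quartics with ten prescribed singular zeros\<close>

lemma form_of_swap23:
  "form_of n c x1 x3 x2 x4 = form_of n (\<lambda>(i,j,k,l). c (i,k,j,l)) x1 x2 x3 x4"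
  unfolding form_of_def
  by (rule sum.reindex_bij_witness[where i = "\<lambda>(i,j,k,l). (i,k,j,l)" and j = "\<lambda>(i,j,k,l). (i,k,j,l)"])
     (auto simp: exps_def)

lemma form_of_swap24:
  "form_of n c x1 x4 x3 x2 = form_of n (\<lambda>(i,j,k,l). c (i,l,k,j)) x1 x2 x3 x4"
  unfolding form_of_def
  by (rule sum.reindex_bij_witness[where i = "\<lambda>(i,j,k,l). (i,l,k,j)" and j = "\<lambda>(i,j,k,l). (i,l,k,j)"])
     (auto simp: exps_def)

lemma singular_zero_swap23:
  assumes "singular_zero f x1 x3 x2 x4"
  shows "singular_zero (\<lambda>x1 x2 x3 x4. f x1 x3 x2 x4) x1 x2 x3 x4"
  using assms unfolding singular_zero_def by blast

lemma singular_zero_swap24: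
  assumes "singular_zero f x1 x4 x3 x2"
  shows "singular_zero (\<lambda>x1 x2 x3 x4. f x1 x4 x3 x2) x1 x2 x3 x4"
  using assms unfolding singular_zero_def by blast

lemma singular_zero_axis1_eqs:
  fixes c :: "nat \<times> nat \<times> nat \<times> nat \<Rightarrow> real"
  assumes "singular_zero (form_of 4 c) \<mu> s 0 0"
  shows "4*c(4,0,0,0)*\<mu>^3 + 3*c(3,1,0,0)*\<mu>^2*s + 2*c(2,2,0,0)*\<mu>*s^2 + c(1,3,0,0)*s^3 = 0"
    "c(3,1,0,0)*\<mu>^3 + 2*c(2,2,0,0)*\<mu>^2*s + 3*c(1,3,0,0)*\<mu>*s^2 + 4*c(0,4,0,0)*s^3 = 0"
    "c(3,0,1,0)*\<mu>^3 + c(2,1,1,0)*\<mu>^2*s + c(1,2,1,0)*\<mu>*s^2 + c(0,3,1,0)*s^3 = 0"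
    "c(3,0,0,1)*\<mu>^3 + c(2,1,0,1)*\<mu>^2*s + c(1,2,0,1)*\<mu>*s^2 + c(0,3,0,1)*s^3 = 0"
  using singular_zero_dderiv[OF assms, of 1 0 0 0] singular_zero_dderiv[OF assms, of 0 1 0 0]
    singular_zero_dderiv[OF assms, of 0 0 1 0] singular_zero_dderiv[OF assms, of 0 0 0 1]
  by (simp_all add: form_of_dderiv_def exps_4 algebra_simps)

lemma singular_zeros_axis1:
  fixes c :: "nat \<times> nat \<times> nat \<times> nat \<Rightarrow> real"
  assumes "\<mu> \<noteq> 0" "\<nu> \<noteq> 0" "c (4,0,0,0) = 0"
    and "singular_zero (form_of 4 c) \<mu> \<nu> 0 0" "singular_zero (form_of 4 c) \<mu> (-\<nu>) 0 0"
  shows "c (3,1,0,0) = 0" "c (2,2,0,0) = 0" "c (1,3,0,0) = 0" "c (0,4,0,0) = 0"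
    and "\<mu>^2 * c (3,0,1,0) + \<nu>^2 * c (1,2,1,0) = 0" "\<mu>^2 * c (2,1,1,0) + \<nu>^2 * c (0,3,1,0) = 0"
    and "\<mu>^2 * c (3,0,0,1) + \<nu>^2 * c (1,2,0,1) = 0" "\<mu>^2 * c (2,1,0,1) + \<nu>^2 * c (0,3,0,1) = 0"
proof -
  note pos = singular_zero_axis1_eqs[OF assms(4)] and neg = singular_zero_axis1_eqs[OF assms(5)]
  \<comment> \<open>Sums and differences of the equations at \<open>\<plusminus>\<nu>\<close> separate their even and odd parts.\<close>
  have "\<mu> * \<nu>^2 * c (2,2,0,0) = 0"
    using pos(1) neg(1) assms(3) by algebra
  then show c22: "c (2,2,0,0) = 0"
    using assms(1,2) by simp
  have "\<nu> * (3 * \<mu>^2 * c (3,1,0,0) + \<nu>^2 * c (1,3,0,0)) = 0"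
    "\<mu> * (\<mu>^2 * c (3,1,0,0) + 3 * \<nu>^2 * c (1,3,0,0)) = 0"
    using pos(1,2) neg(1,2) by algebra+
  then have "3 * \<mu>^2 * c (3,1,0,0) + \<nu>^2 * c (1,3,0,0) = 0"
    "\<mu>^2 * c (3,1,0,0) + 3 * \<nu>^2 * c (1,3,0,0) = 0"
    using assms(1,2) by simp_all
  then have "\<mu>^2 * c (3,1,0,0) = 0" "\<nu>^2 * c (1,3,0,0) = 0"
    by linarith+
  then show "c (3,1,0,0) = 0" "c (1,3,0,0) = 0"
    using assms(1,2) by simp_all
  have "\<nu>^3 * c (0,4,0,0) = 0"
    using pos(2) neg(2) c22 by algebra
  then show "c (0,4,0,0) = 0"
    using assms(2) by simp
  have "\<mu> * (\<mu>^2 * c (3,0,1,0) + \<nu>^2 * c (1,2,1,0)) = 0"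
    "\<nu> * (\<mu>^2 * c (2,1,1,0) + \<nu>^2 * c (0,3,1,0)) = 0"
    "\<mu> * (\<mu>^2 * c (3,0,0,1) + \<nu>^2 * c (1,2,0,1)) = 0"
    "\<nu> * (\<mu>^2 * c (2,1,0,1) + \<nu>^2 * c (0,3,0,1)) = 0"
    using pos(3,4) neg(3,4) by algebra+
  then show "\<mu>^2 * c (3,0,1,0) + \<nu>^2 * c (1,2,1,0) = 0" "\<mu>^2 * c (2,1,1,0) + \<nu>^2 * c (0,3,1,0) = 0"
    "\<mu>^2 * c (3,0,0,1) + \<nu>^2 * c (1,2,0,1) = 0" "\<mu>^2 * c (2,1,0,1) + \<nu>^2 * c (0,3,0,1) = 0"
    using assms(1,2) by simp_all
qed

lemma singular_zeros_axis2:
  fixes c :: "nat \<times> nat \<times> nat \<times> nat \<Rightarrow> real"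
  assumes "\<mu> \<noteq> 0" "\<nu> \<noteq> 0" "c (4,0,0,0) = 0"
    and "singular_zero (form_of 4 c) \<mu> 0 \<nu> 0" "singular_zero (form_of 4 c) \<mu> 0 (-\<nu>) 0"
  shows "c (3,0,1,0) = 0" "c (2,0,2,0) = 0" "c (1,0,3,0) = 0" "c (0,0,4,0) = 0"
    and "\<mu>^2 * c (3,1,0,0) + \<nu>^2 * c (1,1,2,0) = 0" "\<mu>^2 * c (2,1,1,0) + \<nu>^2 * c (0,1,3,0) = 0"
    and "\<mu>^2 * c (3,0,0,1) + \<nu>^2 * c (1,0,2,1) = 0" "\<mu>^2 * c (2,0,1,1) + \<nu>^2 * c (0,0,3,1) = 0"
proof -
  let ?c = "\<lambda>(i,j,k,l). c (i,k,j,l)"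
  have "form_of 4 ?c = (\<lambda>x1 x2 x3 x4. form_of 4 c x1 x3 x2 x4)"
    by (intro ext) (rule form_of_swap23[symmetric])
  then have "singular_zero (form_of 4 ?c) \<mu> s 0 0" if "singular_zero (form_of 4 c) \<mu> 0 s 0" for s
    using singular_zero_swap23[OF that] by simp
  note swapped = singular_zeros_axis1[of \<mu> \<nu> ?c, OF assms(1,2) _ this this, OF _ assms(4,5)]
  show "c (3,0,1,0) = 0" "c (2,0,2,0) = 0" "c (1,0,3,0) = 0" "c (0,0,4,0) = 0"
    "\<mu>^2 * c (3,1,0,0) + \<nu>^2 * c (1,1,2,0) = 0" "\<mu>^2 * c (2,1,1,0) + \<nu>^2 * c (0,1,3,0) = 0"
    "\<mu>^2 * c (3,0,0,1) + \<nu>^2 * c (1,0,2,1) = 0" "\<mu>^2 * c (2,0,1,1) + \<nu>^2 * c (0,0,3,1) = 0"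
    using swapped[simplified, unfolded One_nat_def[symmetric]] assms(3) by simp_all
qed

lemma singular_zeros_axis3:
  fixes c :: "nat \<times> nat \<times> nat \<times> nat \<Rightarrow> real"
  assumes "\<mu> \<noteq> 0" "\<nu> \<noteq> 0" "c (4,0,0,0) = 0"
    and "singular_zero (form_of 4 c) \<mu> 0 0 \<nu>" "singular_zero (form_of 4 c) \<mu> 0 0 (-\<nu>)"
  shows "c (3,0,0,1) = 0" "c (2,0,0,2) = 0" "c (1,0,0,3) = 0" "c (0,0,0,4) = 0"
    and "\<mu>^2 * c (3,0,1,0) + \<nu>^2 * c (1,0,1,2) = 0" "\<mu>^2 * c (2,0,1,1) + \<nu>^2 * c (0,0,1,3) = 0"
    and "\<mu>^2 * c (3,1,0,0) + \<nu>^2 * c (1,1,0,2) = 0" "\<mu>^2 * c (2,1,0,1) + \<nu>^2 * c (0,1,0,3) = 0"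
proof -
  let ?c = "\<lambda>(i,j,k,l). c (i,l,k,j)"
  have "form_of 4 ?c = (\<lambda>x1 x2 x3 x4. form_of 4 c x1 x4 x3 x2)"
    by (intro ext) (rule form_of_swap24[symmetric])
  then have "singular_zero (form_of 4 ?c) \<mu> s 0 0" if "singular_zero (form_of 4 c) \<mu> 0 0 s" for s
    using singular_zero_swap24[OF that] by simp
  note swapped = singular_zeros_axis1[of \<mu> \<nu> ?c, OF assms(1,2) _ this this, OF _ assms(4,5)]
  show "c (3,0,0,1) = 0" "c (2,0,0,2) = 0" "c (1,0,0,3) = 0" "c (0,0,0,4) = 0"
    "\<mu>^2 * c (3,0,1,0) + \<nu>^2 * c (1,0,1,2) = 0" "\<mu>^2 * c (2,0,1,1) + \<nu>^2 * c (0,0,1,3) = 0"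
    "\<mu>^2 * c (3,1,0,0) + \<nu>^2 * c (1,1,0,2) = 0" "\<mu>^2 * c (2,1,0,1) + \<nu>^2 * c (0,1,0,3) = 0"
    using swapped[simplified, unfolded One_nat_def[symmetric]] assms(3) by simp_all
qed

lemma triple_eq_0:
  fixes x y z :: real
  assumes "\<beta> \<noteq> 0" "\<mu> \<noteq> 0" "\<nu> \<noteq> 0" "\<alpha> * x = 0" "\<alpha>^2 * x + \<beta>^2 * (3 * y + z) = 0"
    "\<mu>^2 * x + \<nu>^2 * y = 0" "\<mu>^2 * x + \<nu>^2 * z = 0"
  shows "x = 0 \<and> y = 0 \<and> z = 0"
proof -
  have "\<alpha>^2 * x = 0" using assms(4) by (simp add: power2_eq_square)
  then have "\<beta>^2 * (3 * y + z) = 0" using assms(5) by linarith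
  then have "3 * y + z = 0" using assms(1) by simp
  then have "\<mu>^2 * x = 0" using assms(6,7) by algebra
  then show ?thesis using assms(2,3,6,7) by simp
qed

lemma form_of_eq_0_if_singular_zeros:
  fixes c :: "nat \<times> nat \<times> nat \<times> nat \<Rightarrow> real"
  assumes "\<mu> \<noteq> 0" "\<nu> \<noteq> 0" "\<beta> \<noteq> 0" "c (4,0,0,0) = 0"
    and axis: "singular_zero (form_of 4 c) \<mu> \<nu> 0 0" "singular_zero (form_of 4 c) \<mu> (-\<nu>) 0 0"
      "singular_zero (form_of 4 c) \<mu> 0 \<nu> 0" "singular_zero (form_of 4 c) \<mu> 0 (-\<nu>) 0"
      "singular_zero (form_of 4 c) \<mu> 0 0 \<nu>" "singular_zero (form_of 4 c) \<mu> 0 0 (-\<nu>)"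
    and cube: "singular_zero (form_of 4 c) \<alpha> \<beta> \<beta> \<beta>" "singular_zero (form_of 4 c) \<alpha> \<beta> (-\<beta>) (-\<beta>)"
      "singular_zero (form_of 4 c) \<alpha> (-\<beta>) \<beta> (-\<beta>)" "singular_zero (form_of 4 c) \<alpha> (-\<beta>) (-\<beta>) \<beta>"
  shows "form_of 4 c x1 x2 x3 x4 = 0"
proof -
  note a_axis = singular_zeros_axis1[OF assms(1,2,4) axis(1,2)]
  note b_axis = singular_zeros_axis2[OF assms(1,2,4) axis(3,4)]
  note c_axis = singular_zeros_axis3[OF assms(1,2,4) axis(5,6)]
  have "c (1,2,1,0) = 0" "c (1,2,0,1) = 0" "c (1,1,2,0) = 0" "c (1,0,2,1) = 0" "c (1,0,1,2) = 0"
    "c (1,1,0,2) = 0"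
    using a_axis b_axis c_axis assms(2) by simp_all
  note zeros = this assms(4) a_axis(1-4) b_axis(1-4) c_axis(1-4)
  have derivs: "form_of_dderiv 4 c \<alpha> b1 b2 b3 1 0 0 0 = 0" "form_of_dderiv 4 c \<alpha> b1 b2 b3 0 1 0 0 = 0"
    "form_of_dderiv 4 c \<alpha> b1 b2 b3 0 0 1 0 = 0" "form_of_dderiv 4 c \<alpha> b1 b2 b3 0 0 0 1 = 0"
    if "singular_zero (form_of 4 c) \<alpha> b1 b2 b3" for b1 b2 b3
    using that by (simp_all add: singular_zero_dderiv)
  \<comment> \<open>The simplifier writes the exponent 1 as \<open>Suc 0\<close>; folding it back keeps the coefficient
    names in line with the facts above.\<close>
  note E = cube[THEN derivs(1)] cube[THEN derivs(2)] cube[THEN derivs(3)] cube[THEN derivs(4)]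
  note E = E[unfolded form_of_dderiv_def exps_4, simplified, unfolded One_nat_def[symmetric]]
  \<comment> \<open>The four sign vectors form a group; summing the equations over it with weights
    \<open>1\<close>, \<open>s\<^sub>i\<close> or \<open>s\<^sub>i s\<^sub>j\<close> isolates single coefficients.\<close>
  have "\<beta>^3 * c (1,1,1,1) = 0"
    using E(1-4) zeros by algebra
  then have c1111: "c (1,1,1,1) = 0" using assms(3) by simp
  have "\<beta>^3 * c (0,2,1,1) = 0" "\<beta>^3 * c (0,1,2,1) = 0" "\<beta>^3 * c (0,1,1,2) = 0"
    using E zeros c1111 by algebra+
  then have mixed: "c (0,2,1,1) = 0" "c (0,1,2,1) = 0" "c (0,1,1,2) = 0" using assms(3) by simp_all
  have "\<beta>^3 * (c (0,2,2,0) + c (0,2,0,2)) = 0" "\<beta>^3 * (c (0,2,2,0) + c (0,0,2,2)) = 0"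
    "\<beta>^3 * (c (0,2,0,2) + c (0,0,2,2)) = 0"
    using E zeros c1111 mixed by algebra+
  then have squares: "c (0,2,2,0) = 0" "c (0,2,0,2) = 0" "c (0,0,2,2) = 0" using assms(3) by simp_all
  have "\<alpha> * \<beta>^2 * c (2,1,1,0) = 0" "\<alpha> * \<beta>^2 * c (2,1,0,1) = 0" "\<alpha> * \<beta>^2 * c (2,0,1,1) = 0"
    using E(1-4) zeros by algebra+
  then have alpha_mult: "\<alpha> * c (2,1,1,0) = 0" "\<alpha> * c (2,1,0,1) = 0" "\<alpha> * c (2,0,1,1) = 0"
    using assms(3) by simp_all
  have "\<beta> * (\<alpha>^2 * c (2,1,1,0) + \<beta>^2 * (3 * c (0,3,1,0) + c (0,1,3,0))) = 0"
    "\<beta> * (\<alpha>^2 * c (2,1,0,1) + \<beta>^2 * (3 * c (0,3,0,1) + c (0,1,0,3))) = 0"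
    "\<beta> * (\<alpha>^2 * c (2,0,1,1) + \<beta>^2 * (3 * c (0,0,3,1) + c (0,0,1,3))) = 0"
    using E zeros c1111 mixed squares by algebra+
  then have "\<alpha>^2 * c (2,1,1,0) + \<beta>^2 * (3 * c (0,3,1,0) + c (0,1,3,0)) = 0"
    "\<alpha>^2 * c (2,1,0,1) + \<beta>^2 * (3 * c (0,3,0,1) + c (0,1,0,3)) = 0"
    "\<alpha>^2 * c (2,0,1,1) + \<beta>^2 * (3 * c (0,0,3,1) + c (0,0,1,3)) = 0"
    using assms(3) by simp_all
  note triples = triple_eq_0[OF assms(3,1,2) alpha_mult(1) this(1) a_axis(6) b_axis(6)]
    triple_eq_0[OF assms(3,1,2) alpha_mult(2) this(2) a_axis(8) c_axis(8)]
    triple_eq_0[OF assms(3,1,2) alpha_mult(3) this(3) b_axis(8) c_axis(6)]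
  have "\<forall>e\<in>exps 4. c e = 0"
    unfolding exps_4 using zeros c1111 mixed squares triples by simp
  then show ?thesis
    unfolding form_of_def by (intro sum.neutral) auto
qed

section \<open>The form g in Hadamard coordinates\<close>

lemma three_mul_pairwise_le_square:
  fixes x y z :: real
  shows "3 * (x*y + y*z + z*x) \<le> (x + y + z)^2"
proof -
  have "(x + y + z)^2 - 3 * (x*y + y*z + z*x) = ((x - y)^2 + (y - z)^2 + (z - x)^2) / 2"
    by algebra
  also have "\<dots> \<ge> 0" by simp
  finally show ?thesis by simp
qed

lemma pairwise_products_bounds:
  fixes a b c :: real
  defines "\<rho> \<equiv> sqrt ((a^2 + b^2 + c^2) / 3)"
  shows "a^2*b^2 + b^2*c^2 + c^2*a^2 \<le> 3*\<rho>^4" and "3*\<bar>a*b*c\<bar>*\<rho> \<le> a^2*b^2 + b^2*c^2 + c^2*a^2"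
proof -
  define S T where "S = a^2 + b^2 + c^2" and "T = a^2*b^2 + b^2*c^2 + c^2*a^2"
  have "S \<ge> 0" "T \<ge> 0" unfolding S_def T_def by simp_all
  then have S: "S = 3*\<rho>^2" unfolding \<rho>_def S_def[symmetric] by simp
  have "3*T \<le> S^2"
    using three_mul_pairwise_le_square[of "a^2" "b^2" "c^2"] unfolding S_def T_def .
  then show "T \<le> 3*\<rho>^4" unfolding S by (simp add: power_mult_distrib)
  have "a^2*b^2 * (b^2*c^2) + b^2*c^2 * (c^2*a^2) + c^2*a^2 * (a^2*b^2) = (a*b*c)^2*S"
    unfolding S_def by algebra
  then have "3*(a*b*c)^2*S \<le> T^2"
    using three_mul_pairwise_le_square[of "a^2*b^2" "b^2*c^2" "c^2*a^2"] unfolding T_def by simp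
  then have "(3*\<bar>a*b*c\<bar>*\<rho>)^2 \<le> T^2" unfolding S by (simp add: power_mult_distrib)
  then show "3*\<bar>a*b*c\<bar>*\<rho> \<le> T" using \<open>T \<ge> 0\<close> by (rule power2_le_imp_le)
qed

definition gH :: "real \<Rightarrow> real \<Rightarrow> form4" where
  "gH t w m a b c = 2*(t-1)^4 * (w*m^2 - (w+4)*(a^2+b^2+c^2))^2
     + (8*(3+6*t-t^2)*(t^2+2*t+5)*w^2 - 64*(t-1)^2*(t^2+3)*w - 96*(t-1)^4) * (a^2*b^2+b^2*c^2+c^2*a^2)
     - 16*(t-1)*(t+3)*VF t w * m*a*b*c"

lemma quartic_form_gG: "quartic_form (gG t u)"
proof -
  \<comment> \<open>The \<open>s\<^sub>i\<close> are symmetric, so a coefficient depends only on the orbit of its exponent under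
    permutations, which the sum of squared exponents detects (16, 10, 8, 6, 4 for the orbits of
    (4,0,0,0), (3,1,0,0), (2,2,0,0), (2,1,1,0), (1,1,1,1)); the coefficient of abcd also collects
    the corrections \<open>-4abcd, -12abcd, \<dots>\<close> in \<open>s\<^sub>0, \<dots>, s\<^sub>3\<close>.\<close>
  let ?p = "\<lambda>i. u^2 * i t (omega u)"
  define coef where "coef = (\<lambda>(i,j,k,l). let n = i*i + j*j + k*k + l*l :: nat in
      if n = 16 then ?p pG0 else if n = 10 then ?p pG1 else if n = 8 then ?p pG2 else if n = 6 then ?p pG3
      else ?p pG4 - 4 * ?p pG0 - 12 * ?p pG1 - 6 * ?p pG2 - 12 * ?p pG3)"
  have "gG t u a b c d = form_of 4 coef a b c d" for a b c d
    unfolding form_of_def exps_4 coef_def gG_def s0_def s1_def s2_def s3_def s4_def T31_def T211_def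
    by (simp add: Let_def) algebra
  then show ?thesis
    unfolding quartic_form_iff_hom_form hom_form_def by blast
qed

lemma gG_hadamard: "hadamard (gG t u) m a b c = u^2 * gH t (omega u) m a b c"
  unfolding hadamard_def gG_def gH_def pG0_def pG1_def pG2_def pG3_def pG4_def
    s0_def s1_def s2_def s3_def s4_def T31_def T211_def VF_def
  by algebra

lemma gH_diagonal:
  "gH t w m r r r = ((t-1)*m - (t+3)*r)^2 * (2*w^2*((t-1)*m + (t+3)*r)^2 + 8*VF t w*r^2)"
  unfolding gH_def VF_def by algebra

lemma gH_nonneg:
  assumes "VF t w \<ge> 0"
  shows "0 \<le> gH t w m a b c"
proof -
  define S T p where "S = a^2 + b^2 + c^2" and "T = a^2*b^2 + b^2*c^2 + c^2*a^2" and "p = a*b*c"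
  define A E G where "A = 2*(t-1)^4 * (w*m^2 - (w+4)*S)^2"
    and "E = 8*(3+6*t-t^2)*(t^2+2*t+5)*w^2 - 64*(t-1)^2*(t^2+3)*w - 96*(t-1)^4"
    and "G = -16*(t-1)*(t+3)*VF t w"
  define \<rho> where "\<rho> = sqrt (S/3)"
  have gH: "gH t w m a b c = A + E*T + G*m*p"
    unfolding gH_def A_def E_def G_def S_def T_def p_def by (simp add: algebra_simps)
  have "S \<ge> 0" "T \<ge> 0" "A \<ge> 0" unfolding S_def T_def A_def by simp_all
  then have "\<rho> \<ge> 0" and S: "S = 3*\<rho>^2" unfolding \<rho>_def by simp_all
  note T_bounds = pairwise_products_bounds[of a b c, folded S_def T_def \<rho>_def p_def]
  \<comment> \<open>gH is affine in T; at both ends of the range of T it is controlled by the diagonal.\<close>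
  have diagonal: "0 \<le> A + 3*E*\<rho>^4 + G*m*r^3" if "r^2 = \<rho>^2" for r
  proof -
    have "gH t w m r r r = A + 3*E*\<rho>^4 + G*m*r^3"
      using that unfolding gH_def A_def E_def G_def S by algebra
    moreover have "0 \<le> gH t w m r r r"
      unfolding gH_diagonal using assms by (intro mult_nonneg_nonneg add_nonneg_nonneg) simp_all
    ultimately show ?thesis by simp
  qed
  have K: "0 \<le> A + 3*E*\<rho>^4 - \<bar>G*m\<bar>*\<rho>^3"
    using diagonal[of \<rho>] diagonal[of "-\<rho>"] by (cases "G*m \<ge> 0") simp_all
  have "\<bar>G*m*p*(3*\<rho>^4)\<bar> = (\<bar>G*m\<bar>*\<rho>^3) * (3*\<bar>p\<bar>*\<rho>)"
    using \<open>\<rho> \<ge> 0\<close> by (simp add: abs_mult power_abs algebra_simps power3_eq_cube power4_eq_xxxx)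
  also have "\<dots> \<le> (\<bar>G*m\<bar>*\<rho>^3) * T"
    using T_bounds(2) \<open>\<rho> \<ge> 0\<close> by (simp add: mult_left_mono)
  finally have "0 \<le> \<bar>G*m\<bar>*\<rho>^3*T + G*m*p*(3*\<rho>^4)" by linarith
  moreover have "0 \<le> (3*\<rho>^4 - T)*A + T*(A + 3*E*\<rho>^4 - \<bar>G*m\<bar>*\<rho>^3)"
    using T_bounds(1) \<open>A \<ge> 0\<close> \<open>T \<ge> 0\<close> K by simp
  moreover have "3*\<rho>^4 * gH t w m a b c = (3*\<rho>^4 - T)*A + T*(A + 3*E*\<rho>^4 - \<bar>G*m\<bar>*\<rho>^3)
      + (\<bar>G*m\<bar>*\<rho>^3*T + G*m*p*(3*\<rho>^4))"
    unfolding gH by (simp add: algebra_simps)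
  ultimately have "0 \<le> 3*\<rho>^4 * gH t w m a b c" by linarith
  moreover have "gH t w m a b c = A" if "\<rho> = 0"
    using that S unfolding gH S_def T_def p_def by (simp add: add_nonneg_eq_0_iff)
  ultimately show ?thesis
    using \<open>\<rho> \<ge> 0\<close> \<open>A \<ge> 0\<close> by (cases "\<rho> = 0") (simp_all add: zero_le_mult_iff)
qed

lemma gH_axis_zeros:
  assumes "u \<noteq> 0" "s = 1 - u \<or> s = u - 1"
  shows "gH t (omega u) (1+u) s 0 0 = 0" "gH t (omega u) (1+u) 0 s 0 = 0" "gH t (omega u) (1+u) 0 0 s = 0"
proof -
  have "s^2 = (1 - u)^2" using assms(2) by (auto simp: power2_commute)
  moreover have "omega u * (1+u)^2 = (omega u + 4) * (1-u)^2"
    unfolding omega_def using assms(1) by (simp add: field_simps) algebra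
  ultimately show "gH t (omega u) (1+u) s 0 0 = 0" "gH t (omega u) (1+u) 0 s 0 = 0"
    "gH t (omega u) (1+u) 0 0 s = 0"
    unfolding gH_def by simp_all
qed

lemma gH_cube_zeros:
  "gH t w (t+3) (t-1) (t-1) (t-1) = 0" "gH t w (t+3) (t-1) (-(t-1)) (-(t-1)) = 0"
  "gH t w (t+3) (-(t-1)) (t-1) (-(t-1)) = 0" "gH t w (t+3) (-(t-1)) (-(t-1)) (t-1) = 0"
  unfolding gH_def VF_def by algebra+

section \<open>Extremality\<close>

lemma extremal_P44I:
  assumes "g \<in> P44" "g x1 x2 x3 x4 > 0"
    and rigid: "\<And>f. quartic_form f \<Longrightarrow>
      (\<And>y1 y2 y3 y4. g y1 y2 y3 y4 = 0 \<Longrightarrow> singular_zero f y1 y2 y3 y4) \<Longrightarrow>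
      f x1 x2 x3 x4 = 0 \<Longrightarrow> f = (\<lambda>_ _ _ _. 0)"
  shows "extremal_P44 g"
  unfolding extremal_P44_def
proof (intro conjI ballI impI)
  show "g \<in> P44" by fact
  show "g \<noteq> (\<lambda>_ _ _ _. 0)" using assms(2) by auto
next
  fix p q assume "p \<in> P44" "q \<in> P44" and g: "g = (\<lambda>a b c d. p a b c d + q a b c d)"
  then have p_nonneg: "0 \<le> p a b c d" and q_nonneg: "0 \<le> q a b c d" and p_le: "p a b c d \<le> g a b c d"
    for a b c d by (auto simp: P44_def)
  have hom: "hom_form 4 p" "hom_form 4 g"
    using \<open>p \<in> P44\<close> \<open>g \<in> P44\<close> by (simp_all add: P44_def quartic_form_iff_hom_form)
  define r where "r = p x1 x2 x3 x4 / g x1 x2 x3 x4"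
  have "(\<lambda>a b c d. p a b c d - r * g a b c d) = (\<lambda>_ _ _ _. 0)"
  proof (rule rigid)
    show "quartic_form (\<lambda>a b c d. p a b c d - r * g a b c d)"
      using hom unfolding quartic_form_iff_hom_form by (rule hom_form_diff)
    show "singular_zero (\<lambda>a b c d. p a b c d - r * g a b c d) y1 y2 y3 y4"
      if "g y1 y2 y3 y4 = 0" for y1 y2 y3 y4
      using that p_le[of y1 y2 y3 y4] p_nonneg[of y1 y2 y3 y4] \<open>g \<in> P44\<close>
      by (intro singular_zero_diff singular_zero_if_nonneg[OF hom(1) p_nonneg]
          singular_zero_if_nonneg[OF hom(2)]) (auto simp: P44_def)
    show "p x1 x2 x3 x4 - r * g x1 x2 x3 x4 = 0"
      using assms(2) by (simp add: r_def)
  qed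
  then have p: "p = (\<lambda>a b c d. r * g a b c d)"
    by (simp add: fun_eq_iff)
  then have q: "q = (\<lambda>a b c d. (1 - r) * g a b c d)"
    using g by (simp add: fun_eq_iff algebra_simps)
  have "r \<ge> 0" using p_nonneg assms(2) by (simp add: r_def)
  with p show "\<exists>r\<ge>0. p = (\<lambda>a b c d. r * g a b c d)" by blast
  have "1 - r \<ge> 0"
    using q_nonneg[of x1 x2 x3 x4] assms(2) by (simp add: q zero_le_mult_iff)
  with q show "\<exists>r\<ge>0. q = (\<lambda>a b c d. r * g a b c d)" by blast
qed

lemma gG_rigid:
  assumes "t \<noteq> 1" "u \<noteq> 0" "u \<noteq> 1" "u \<noteq> -1" "quartic_form f" "f 1 1 1 1 = 0"
    and sz: "\<And>y1 y2 y3 y4. gG t u y1 y2 y3 y4 = 0 \<Longrightarrow> singular_zero f y1 y2 y3 y4"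
  shows "f = (\<lambda>_ _ _ _. 0)"
proof -
  obtain k where k: "hadamard f = form_of 4 k"
    using hom_form_hadamard assms(5) unfolding quartic_form_iff_hom_form hom_form_def by blast
  have k_sz: "singular_zero (form_of 4 k) m a b c" if "gH t (omega u) m a b c = 0" for m a b c
    using that sz[THEN singular_zero_hadamard] gG_hadamard[of t u m a b c] unfolding k
    by (simp add: hadamard_def)
  have "k (4,0,0,0) = form_of 4 k 1 0 0 0"
    by (simp add: form_of_def exps_4)
  also have "\<dots> = f 1 1 1 1"
    by (simp add: k[symmetric] hadamard_def)
  finally have "k (4,0,0,0) = f 1 1 1 1" .
  have "form_of 4 k m a b c = 0" for m a b c
  proof (rule form_of_eq_0_if_singular_zeros)
    show "1 + u \<noteq> 0" "1 - u \<noteq> 0" "t - 1 \<noteq> 0"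
      using assms(1,3,4) by (auto simp: add_eq_0_iff)
    show "k (4,0,0,0) = 0"
      using \<open>k (4,0,0,0) = f 1 1 1 1\<close> assms(6) by simp
    show "singular_zero (form_of 4 k) (1 + u) (1 - u) 0 0" "singular_zero (form_of 4 k) (1 + u) (-(1 - u)) 0 0"
      "singular_zero (form_of 4 k) (1 + u) 0 (1 - u) 0" "singular_zero (form_of 4 k) (1 + u) 0 (-(1 - u)) 0"
      "singular_zero (form_of 4 k) (1 + u) 0 0 (1 - u)" "singular_zero (form_of 4 k) (1 + u) 0 0 (-(1 - u))"
      using gH_axis_zeros[OF assms(2), of "1 - u"] gH_axis_zeros[OF assms(2), of "u - 1"] k_sz
      by simp_all
    show "singular_zero (form_of 4 k) (t + 3) (t - 1) (t - 1) (t - 1)"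
      "singular_zero (form_of 4 k) (t + 3) (t - 1) (-(t - 1)) (-(t - 1))"
      "singular_zero (form_of 4 k) (t + 3) (-(t - 1)) (t - 1) (-(t - 1))"
      "singular_zero (form_of 4 k) (t + 3) (-(t - 1)) (-(t - 1)) (t - 1)"
      using gH_cube_zeros k_sz by blast+
  qed
  then show ?thesis
    using hadamard_inverse[of f] by (simp add: k fun_eq_iff)
qed

text \<open>Only \<open>t \<noteq> 1\<close>, \<open>u \<notin> {0, 1, -1}\<close> and \<open>V\<^sub>F \<ge> 0\<close> enter the argument.\<close>

theorem theorem2p5:
  fixes t u :: real
  assumes "t \<noteq> 0" "t \<noteq> 1"
    and "u \<noteq> 0" "u \<noteq> 1" "u \<noteq> -1"
    and "2*u \<noteq> t + 1" "t*u + u \<noteq> 2"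
    and "DF t u \<noteq> 0"
    and "VF t (omega u) > 0"
  shows "extremal_P44 (gG t u)"
proof (rule extremal_P44I)
  have "0 \<le> gG t u a b c d" for a b c d
    using hadamard_inverse[of "gG t u" a b c d] gG_hadamard gH_nonneg assms(9) by simp
  then show "gG t u \<in> P44"
    using quartic_form_gG by (simp add: P44_def)
  have "omega u \<noteq> 0"
    using assms(3,4) by (auto simp: omega_def field_simps) algebra
  then show "gG t u 1 1 1 1 > 0"
    using hadamard_inverse[of "gG t u" 1 1 1 1] gG_hadamard[of t u 1 0 0 0] assms(2,3)
    by (simp add: gH_def)
qed (use gG_rigid assms(2-5) in blast)

end
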